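(* Let $\ell,k\in\mathbb{Z}_{>0}$, let $D\subseteq\mathbb{R}^\ell$ be convex and $\sigma:\mathbb{R}^\ell\to\mathbb{R}^k$ affine, and set $D_\sigma:=\operatorname{conv}(D\cap\sigma^{-1}(\mathbb{Z}^k))$. If $\operatorname{rdist}(D_\sigma,D)=\delta>0$, then $\operatorname{width}(\sigma(D_\sigma))\leq\frac{1+\delta}{\delta}\operatorname{Flt}(k)$.
   Context: For $B\subseteq\mathbb{R}^k$, $\operatorname{width}(B)=\inf_{v\in\mathbb{Z}^k\setminus\{0\}}\big(\sup_{x\in B}v^\intercal x-\inf_{x\in B}v^\intercal x\big)$. $\operatorname{Flt}(k)$ is the smallest $\lambda\geq0$ such that every convex, closed, full-dimensional $B\subseteq\mathbb{R}^k$ with $B\cap\mathbb{Z}^k=\emptyset$ satisfies $\operatorname{width}(B)\leq\lambda$. For convex $A\subseteq B\subseteq\mathbb{R}^\ell$, $\operatorname{rdist}(A,B)=\sup_{\pi}\frac{\sup_{b\in B}\inf_{a\in A}|\pi(b)-\pi(a)|}{\sup_{a,a'\in A}|\pi(a)-\pi(a')|}$ over linear $\pi:\mathbb{R}^\ell\to\mathbb{R}$ (denominator $\infty$ and $0/0$ read as $0$; $\operatorname{rdist}(\emptyset,\emptyset)=0$, $\operatorname{rdist}(\emptyset,B)=\infty$ for $B\ne\emptyset$). *)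

theory Defs
  imports "HOL-Analysis.Analysis"
begin

definition int_vecs :: "(real ^ 'k) set" where
  "int_vecs = {x. \<forall>i. x $ i \<in> \<int>}"

definition affine_map :: "(real ^ 'l \<Rightarrow> real ^ 'k) \<Rightarrow> bool" where
  "affine_map \<sigma> \<longleftrightarrow> (\<exists>f c. linear f \<and> (\<forall>x. \<sigma> x = f x + c))"

definition lattice_width :: "(real ^ 'k) set \<Rightarrow> ereal" where
  "lattice_width B = (INF v \<in> int_vecs - {0}.
      (SUP x\<in>B. ereal (v \<bullet> x)) - (INF x\<in>B. ereal (v \<bullet> x)))"

definition Flt :: "'k::finite itself \<Rightarrow> ereal" where
  "Flt _ = Inf {lam::ereal. lam \<ge> 0 \<and>
      (\<forall>B::(real^'k) set. convex B \<and> closed B \<and> interior B \<noteq> {} \<and> B \<inter> int_vecs = {}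
          \<longrightarrow> lattice_width B \<le> lam)}"

definition rquot :: "ereal \<Rightarrow> ereal \<Rightarrow> ereal" where
  "rquot n d = (if d = \<infinity> then 0 else if d = 0 then (if n = 0 then 0 else \<infinity>) else n / d)"

definition rdist :: "(real ^ 'l) set \<Rightarrow> (real ^ 'l) set \<Rightarrow> ereal" where
  "rdist A B =
     (if A = {} then (if B = {} then 0 else \<infinity>)
      else (SUP \<pi> \<in> {\<pi>::real^'l \<Rightarrow> real. linear \<pi>}.
              rquot (SUP b\<in>B. INF a\<in>A. ereal \<bar>\<pi> b - \<pi> a\<bar>)
                    (SUP p\<in>A \<times> A. ereal \<bar>\<pi> (fst p) - \<pi> (snd p)\<bar>)))"

end

theory Submission
  imports Defs
begin

text \<open>If \<open>\<sigma>(D\<^sub>\<sigma>)\<close> has empty interior, it is the convex hull of lattice points in a proper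
  affine subspace; that subspace lies in a hyperplane \<open>v \<bullet> x = c\<close> with \<open>v\<close> integral (take \<open>v\<close>
  a column of an adjugate), so the lattice width is \<open>0\<close>.
  Otherwise, for \<open>0 < d < \<delta>\<close> the definition of \<open>rdist\<close> yields a linear \<open>\<pi>\<close> along which
  \<open>D\<^sub>\<sigma>\<close> has spread \<open>w\<close> and a point \<open>b \<in> D\<close> at \<open>\<pi>\<close>-distance more than \<open>d w\<close> from \<open>D\<^sub>\<sigma>\<close>.
  The homothety of \<open>\<sigma>(D\<^sub>\<sigma>)\<close> about \<open>\<sigma>(b)\<close> with ratio \<open>s = d/(1+d)\<close> is then lattice-free:
  a lattice point in it is the image of a point of \<open>D\<close> between \<open>b\<close> and \<open>D\<^sub>\<sigma>\<close>, which would
  belong to \<open>D\<^sub>\<sigma>\<close> and yet be too far from it. Hence \<open>s\<close> times the width of \<open>\<sigma>(D\<^sub>\<sigma>)\<close> is at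
  most \<open>Flt(k)\<close>, and \<open>d \<rightarrow> \<delta>\<close> gives the bound.\<close>

lemma SUP_minus_INF_eq_SUP_SUP_diff:
  fixes g :: "'a \<Rightarrow> real"
  assumes "X \<noteq> {}"
  shows "(SUP x\<in>X. ereal (g x)) - (INF y\<in>X. ereal (g y)) = (SUP x\<in>X. SUP y\<in>X. ereal (g x - g y))"
proof -
  obtain x0 where "x0 \<in> X" using assms by blast
  then have "(INF y\<in>X. ereal (g y)) \<le> ereal (g x0)" by (rule INF_lower)
  then have "(INF y\<in>X. ereal (g y)) \<noteq> \<infinity>" by auto
  then have "(SUP x\<in>X. ereal (g x)) - (INF y\<in>X. ereal (g y))
      = (SUP x\<in>X. ereal (g x) - (INF y\<in>X. ereal (g y)))"
    by (simp add: SUP_ereal_minus_left assms)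
  also have "\<dots> = (SUP x\<in>X. SUP y\<in>X. ereal (g x) - ereal (g y))"
    by (rule SUP_cong[OF refl], rule SUP_ereal_minus_right[symmetric]) (simp_all add: assms)
  finally show ?thesis by simp
qed

lemma SUP_minus_INF_eq_SUP_SUP_abs_diff:
  fixes g :: "'a \<Rightarrow> real"
  assumes "X \<noteq> {}"
  shows "(SUP x\<in>X. ereal (g x)) - (INF y\<in>X. ereal (g y)) = (SUP x\<in>X. SUP y\<in>X. ereal \<bar>g x - g y\<bar>)"
proof -
  let ?S = "\<lambda>h. SUP x\<in>X. SUP y\<in>X. ereal (h x y)"
  have "?S (\<lambda>x y. \<bar>g x - g y\<bar>) \<le> ?S (\<lambda>x y. g x - g y)"
  proof (intro SUP_least)
    fix x y assume "x \<in> X" "y \<in> X"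
    have "ereal (g x - g y) \<le> ?S (\<lambda>x y. g x - g y)"
      using \<open>x \<in> X\<close> \<open>y \<in> X\<close> by (intro SUP_upper2[of x] SUP_upper2[of y]) auto
    moreover have "ereal (g y - g x) \<le> ?S (\<lambda>x y. g x - g y)"
      using \<open>x \<in> X\<close> \<open>y \<in> X\<close> by (intro SUP_upper2[of y] SUP_upper2[of x]) auto
    moreover have "\<bar>g x - g y\<bar> = g x - g y \<or> \<bar>g x - g y\<bar> = g y - g x" by linarith
    ultimately show "ereal \<bar>g x - g y\<bar> \<le> ?S (\<lambda>x y. g x - g y)" by metis
  qed
  moreover have "?S (\<lambda>x y. g x - g y) \<le> ?S (\<lambda>x y. \<bar>g x - g y\<bar>)"
    by (intro SUP_subset_mono order_refl) auto
  ultimately show ?thesis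
    using SUP_minus_INF_eq_SUP_SUP_diff[OF assms, of g] by order
qed

lemma lattice_width_eq_INF_SUP_SUP:
  fixes X :: "(real^'k) set"
  assumes "X \<noteq> {}"
  shows "lattice_width X = (INF v\<in>int_vecs - {0}. SUP x\<in>X. SUP y\<in>X. ereal \<bar>v \<bullet> x - v \<bullet> y\<bar>)"
  unfolding lattice_width_def using SUP_minus_INF_eq_SUP_SUP_abs_diff[OF assms] by simp

lemma lattice_width_mono:
  fixes X :: "(real^'k) set"
  assumes "X \<noteq> {}" "X \<subseteq> Y"
  shows "lattice_width X \<le> lattice_width Y"
proof -
  have "Y \<noteq> {}" using assms by blast
  then show ?thesis
    unfolding lattice_width_eq_INF_SUP_SUP[OF assms(1)] lattice_width_eq_INF_SUP_SUP[OF \<open>Y \<noteq> {}\<close>]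
    using assms(2) by (intro INF_mono bexI SUP_subset_mono) auto
qed

lemma lattice_width_affinity:
  fixes X :: "(real^'k) set"
  assumes "X \<noteq> {}" "0 \<le> c"
  shows "ereal c * lattice_width X \<le> lattice_width ((\<lambda>x. a + c *\<^sub>R x) ` X)"
proof -
  define spread where "spread Y v = (SUP x\<in>Y. SUP y\<in>Y. ereal \<bar>v \<bullet> x - v \<bullet> y\<bar>)"
    for Y :: "(real^'k) set" and v
  have spread_affinity: "spread ((\<lambda>x. a + c *\<^sub>R x) ` X) v = ereal c * spread X v" for v
  proof -
    have "\<bar>v \<bullet> (a + c *\<^sub>R x) - v \<bullet> (a + c *\<^sub>R y)\<bar> = c * \<bar>v \<bullet> x - v \<bullet> y\<bar>" for x y
      using assms(2) by (simp add: inner_simps abs_mult flip: right_diff_distrib)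
    then have "spread ((\<lambda>x. a + c *\<^sub>R x) ` X) v = (SUP x\<in>X. ereal c * (SUP y\<in>X. ereal \<bar>v \<bullet> x - v \<bullet> y\<bar>))"
      using assms by (simp add: spread_def image_image SUP_ereal_mult_left flip: times_ereal.simps)
    also have "\<dots> = ereal c * spread X v"
      unfolding spread_def using assms by (intro SUP_ereal_mult_left) (auto intro: SUP_upper2)
    finally show ?thesis .
  qed
  have "(\<lambda>x. a + c *\<^sub>R x) ` X \<noteq> {}" using assms(1) by blast
  then have "lattice_width ((\<lambda>x. a + c *\<^sub>R x) ` X) = (INF v\<in>int_vecs - {0}. ereal c * spread X v)"
    by (simp add: lattice_width_eq_INF_SUP_SUP spread_affinity flip: spread_def)
  moreover have "ereal c * lattice_width X \<le> (INF v\<in>int_vecs - {0}. ereal c * spread X v)"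
  proof (rule INF_greatest)
    fix w :: "real^'k" assume "w \<in> int_vecs - {0}"
    then show "ereal c * lattice_width X \<le> ereal c * spread X w"
      unfolding lattice_width_eq_INF_SUP_SUP[OF assms(1)] spread_def
      using assms(2) by (intro ereal_mult_left_mono INF_lower) auto
  qed
  ultimately show ?thesis by simp
qed

lemma ereal_mult_le_of_scaled_le:
  fixes W F :: ereal
  assumes "0 < q" and scaled: "\<And>t. 0 < t \<Longrightarrow> t < q \<Longrightarrow> ereal t * W \<le> F"
  shows "ereal q * W \<le> F"
proof -
  have half: "ereal (q / 2) * W \<le> F" using assms by (intro scaled) auto
  show ?thesis
  proof (cases W)
    case (real w)
    show ?thesis
    proof (cases F)
      case (real f)
      have "z * (q * w) \<le> f" if "0 < z" "z < 1" for z
        using scaled[of "z * q"] that assms(1) \<open>W = ereal w\<close> real by (simp add: mult.assoc)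
      then have "q * w \<le> f" by (rule field_le_mult_one_interval)
      then show ?thesis using \<open>W = ereal w\<close> real by simp
    qed (use half real in auto)
  qed (use half assms(1) in auto)
qed

lemma interior_affinity_nonempty:
  fixes S :: "'a::real_normed_vector set"
  assumes "interior S \<noteq> {}" "c \<noteq> 0"
  shows "interior ((\<lambda>x. a + c *\<^sub>R x) ` S) \<noteq> {}"
proof -
  have "(\<lambda>x. a + c *\<^sub>R x) ` interior S \<subseteq> interior ((\<lambda>x. a + c *\<^sub>R x) ` S)"
    by (intro interior_maximal image_mono interior_subset open_affinity open_interior assms(2))
  then show ?thesis using assms(1) by blast
qed

lemma closed_affinity:
  fixes S :: "'a::real_normed_vector set"
  assumes "closed S"
  shows "closed ((\<lambda>x. a + c *\<^sub>R x) ` S)"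
proof -
  have "(\<lambda>x. a + c *\<^sub>R x) ` S = (+) a ` (*\<^sub>R) c ` S" by (simp add: image_image)
  then show ?thesis using assms by (simp add: closed_translation closed_scaling)
qed

lemma Flt_nonneg: "0 \<le> Flt TYPE('k::finite)"
  unfolding Flt_def by (rule Inf_greatest) auto

text \<open>\<open>Flt\<close> only bounds closed sets; closedness is dispensable because shrinking the closure
  of \<open>B\<close> towards an interior point lands inside \<open>B\<close>.\<close>
lemma lattice_width_le_Flt:
  fixes B :: "(real^'k) set"
  assumes "convex B" "interior B \<noteq> {}" "B \<inter> int_vecs = {}"
  shows "lattice_width B \<le> Flt TYPE('k)"
  unfolding Flt_def
proof (rule Inf_greatest, clarify)
  fix lam :: ereal
  assume Flt_bound: "\<forall>C::(real^'k) set. convex C \<and> closed C \<and> interior C \<noteq> {} \<and> C \<inter> int_vecs = {}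
          \<longrightarrow> lattice_width C \<le> lam"
  obtain p where p: "p \<in> interior B" using assms(2) by blast
  have "B \<noteq> {}" using p interior_subset by blast
  have scaled: "ereal t * lattice_width B \<le> lam" if t: "0 < t" "t < 1" for t
  proof -
    define h where "h x = (1 - t) *\<^sub>R p + t *\<^sub>R x" for x
    have "h ` closure B \<subseteq> B"
    proof
      fix y assume "y \<in> h ` closure B"
      then obtain z where "z \<in> closure B" "y = z - (1 - t) *\<^sub>R (z - p)"
        by (auto simp: h_def algebra_simps)
      then show "y \<in> B"
        using mem_interior_closure_convex_shrink[OF assms(1) p, of z "1 - t"] t interior_subset by auto
    qed
    moreover have "convex (h ` closure B)" "closed (h ` closure B)"
      using assms(1) by (simp_all add: h_def convex_affinity closed_affinity convex_closure)
    moreover have "interior (h ` closure B) \<noteq> {}"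
      using assms(2) t interior_mono[OF closure_subset, of B] unfolding h_def
      by (intro interior_affinity_nonempty) auto
    moreover have "h ` closure B \<inter> int_vecs = {}" using \<open>h ` closure B \<subseteq> B\<close> assms(3) by blast
    ultimately have "lattice_width (h ` closure B) \<le> lam" using Flt_bound by blast
    moreover have "ereal t * lattice_width B \<le> lattice_width (h ` B)"
      unfolding h_def using \<open>B \<noteq> {}\<close> t by (intro lattice_width_affinity) auto
    moreover have "lattice_width (h ` B) \<le> lattice_width (h ` closure B)"
      using \<open>B \<noteq> {}\<close> by (intro lattice_width_mono image_mono closure_subset) auto
    ultimately show ?thesis by order
  qed
  have "ereal 1 * lattice_width B \<le> lam" using ereal_mult_le_of_scaled_le[OF zero_less_one scaled] .
  then show "lattice_width B \<le> lam" by (metis mult_1 one_ereal_def)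
qed

lemma int_vecs_diff: "x \<in> int_vecs \<Longrightarrow> y \<in> int_vecs \<Longrightarrow> x - y \<in> int_vecs"
  by (simp add: int_vecs_def Ints_diff)

lemma det_in_Ints:
  fixes M :: "real^'n^'n"
  assumes "\<And>i j. M $ i $ j \<in> \<int>"
  shows "det M \<in> \<int>"
  unfolding det_def using assms by (intro Ints_sum Ints_mult Ints_prod Ints_of_int) auto

text \<open>The \<open>j\<close>-th column of the adjugate of \<open>M\<close>.\<close>
definition cofactor_vec :: "real^'n^'n \<Rightarrow> 'n \<Rightarrow> real^'n" where
  "cofactor_vec M j = (\<chi> k. det (\<chi> i. if i = j then axis k 1 else M $ i))"

lemma inner_cofactor_vec: "cofactor_vec M j \<bullet> x = det (\<chi> i. if i = j then x else M $ i)"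
proof -
  define F where "F x = det (\<chi> i. if i = j then x else M $ i)" for x
  have "linear F"
  proof (rule linearI)
    show "F (x + y) = F x + F y" for x y
      unfolding F_def using det_row_add[of j "\<lambda>_. x" "\<lambda>_. y" "\<lambda>i. M $ i"] by simp
    show "F (c *\<^sub>R x) = c *\<^sub>R F x" for c x
      unfolding F_def using det_row_mul[of j c "\<lambda>_. x" "\<lambda>i. M $ i"]
      unfolding scalar_mult_eq_scaleR by simp
  qed
  have "F x = F (\<Sum>k\<in>UNIV. x $ k *\<^sub>R axis k 1)"
    using basis_expansion[of x] by (simp add: scalar_mult_eq_scaleR)
  also have "\<dots> = (\<Sum>k\<in>UNIV. x $ k * F (axis k 1))"
    by (simp add: linear_sum[OF \<open>linear F\<close>] linear_scale[OF \<open>linear F\<close>])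
  also have "\<dots> = cofactor_vec M j \<bullet> x"
    by (simp add: cofactor_vec_def F_def inner_vec_def mult.commute)
  finally show ?thesis by (simp add: F_def)
qed

lemma cofactor_vec_in_int_vecs:
  assumes "\<And>i. M $ i \<in> int_vecs"
  shows "cofactor_vec M j \<in> int_vecs"
  using assms unfolding int_vecs_def cofactor_vec_def
  by (auto intro!: det_in_Ints simp: axis_def)

lemma exists_int_vec_orthogonal_to_basis_but_one:
  fixes B :: "(real^'k) set"
  assumes "B \<subseteq> int_vecs" "independent B" "span B = UNIV" "e \<in> B"
  shows "\<exists>v\<in>int_vecs. v \<bullet> e \<noteq> 0 \<and> (\<forall>u\<in>B - {e}. v \<bullet> u = 0)"
proof -
  have "card B = CARD('k)"
    using basis_card_eq_dim[of B UNIV] assms(2,3) by simp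
  then obtain h where h: "bij_betw h (UNIV :: 'k set) B"
    using finite_same_card_bij[of "UNIV :: 'k set" B] finiteI_independent[OF assms(2)] by auto
  then obtain j where j: "h j = e" using assms(4) unfolding bij_betw_def by blast
  define M :: "real^'k^'k" where "M = (\<chi> i. h i)"
  have "rows M = B" using h by (auto simp: rows_def row_def M_def bij_betw_def)
  then have "invertible M"
    unfolding invertible_left_inverse matrix_left_invertible_span_rows using assms(3) by simp
  then have "det M \<noteq> 0" by (simp add: invertible_det_nz)
  define v where "v = cofactor_vec M j"
  have "(\<chi> i. if i = j then e else M $ i) = M" using j by (simp add: M_def vec_eq_iff)
  then have "v \<bullet> e = det M" unfolding v_def inner_cofactor_vec by simp
  moreover have "v \<in> int_vecs"
    unfolding v_def using h assms(1) by (intro cofactor_vec_in_int_vecs) (auto simp: M_def bij_betw_def)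
  moreover have "v \<bullet> u = 0" if u: "u \<in> B - {e}" for u
  proof -
    obtain i where "h i = u" using h u unfolding bij_betw_def by blast
    with u j have "i \<noteq> j" by auto
    then show ?thesis
      unfolding v_def inner_cofactor_vec using \<open>h i = u\<close>
      by (intro det_identical_rows[of i j]) (auto simp: row_def M_def)
  qed
  ultimately show ?thesis using \<open>det M \<noteq> 0\<close> by (intro bexI[of _ v]) auto
qed

lemma exists_int_vec_orthogonal:
  fixes T :: "(real^'k) set"
  assumes "T \<subseteq> int_vecs" "span T \<noteq> UNIV"
  shows "\<exists>v\<in>int_vecs - {0}. \<forall>x\<in>T. v \<bullet> x = 0"
proof -
  obtain T0 where T0: "T0 \<subseteq> T" "independent T0" "T \<subseteq> span T0"
    using maximal_independent_subset by blast
  obtain B where B: "T0 \<subseteq> B" "B \<subseteq> T \<union> Basis" "independent B" "T \<union> Basis \<subseteq> span B"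
    using maximal_independent_subset_extend[of T0 "T \<union> Basis"] T0 by blast
  have "span B = UNIV"
    using B(4) span_mono[of Basis "span B"] by (auto simp: span_span)
  have "Basis \<subseteq> int_vecs" by (auto simp: Basis_vec_def int_vecs_def axis_def)
  then have "B \<subseteq> int_vecs" using B(2) assms(1) by blast
  have "\<not> B \<subseteq> T0"
  proof
    assume "B \<subseteq> T0"
    then have "span B \<subseteq> span T0" by (rule span_mono)
    then have "span T0 = UNIV" using \<open>span B = UNIV\<close> by auto
    then show False using assms(2) span_mono[OF T0(1)] by auto
  qed
  then obtain e where e: "e \<in> B" "e \<notin> T0" by blast
  obtain v where v: "v \<in> int_vecs" "v \<bullet> e \<noteq> 0" "\<forall>u\<in>B - {e}. v \<bullet> u = 0"
    using exists_int_vec_orthogonal_to_basis_but_one[OF \<open>B \<subseteq> int_vecs\<close> B(3) \<open>span B = UNIV\<close> e(1)] by blast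
  have "v \<bullet> x = 0" if "x \<in> T" for x
  proof -
    have "x \<in> span (B - {e})" using that T0(3) span_mono[of T0 "B - {e}"] B(1) e(2) by blast
    then show ?thesis using v(3) orthogonal_to_span[of x "B - {e}" v] by (simp add: orthogonal_def inner_commute)
  qed
  moreover have "v \<noteq> 0" using v(2) by auto
  ultimately show ?thesis using v(1) by blast
qed

lemma lattice_width_convex_hull_flat:
  fixes L :: "(real^'k) set"
  assumes "L \<subseteq> int_vecs" "L \<noteq> {}" "interior (convex hull L) = {}"
  shows "lattice_width (convex hull L) \<le> 0"
proof -
  obtain a where "a \<in> L" using assms(2) by blast
  have "affine hull L \<noteq> UNIV"
  proof
    assume "affine hull L = UNIV"
    then have "rel_interior (convex hull L) = interior (convex hull L)"
      by (intro rel_interior_interior) simp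
    moreover have "rel_interior (convex hull L) \<noteq> {}"
      using assms(2) by (simp add: rel_interior_eq_empty)
    ultimately show False using assms(3) by simp
  qed
  then have "span ((\<lambda>x. -a + x) ` L) \<noteq> UNIV"
    using affine_hull_span_gen[OF hull_inc[OF \<open>a \<in> L\<close>]] by (metis surj_plus)
  moreover have "(\<lambda>x. -a + x) ` L \<subseteq> int_vecs"
    using assms(1) \<open>a \<in> L\<close> int_vecs_diff by fastforce
  ultimately have "\<exists>v\<in>int_vecs - {0}. \<forall>x\<in>(\<lambda>x. -a + x) ` L. v \<bullet> x = 0"
    by (intro exists_int_vec_orthogonal)
  then obtain v where v: "v \<in> int_vecs - {0}" "\<forall>x\<in>(\<lambda>x. -a + x) ` L. v \<bullet> x = 0"
    by (elim bexE)
  have "convex hull L \<subseteq> {x. v \<bullet> x = v \<bullet> a}"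
    using v(2) by (intro hull_minimal convex_hyperplane) (auto simp: inner_simps)
  then have "(SUP x\<in>convex hull L. ereal (v \<bullet> x)) - (INF x\<in>convex hull L. ereal (v \<bullet> x)) = 0"
    using assms(2) by (simp add: SUP_eq_const INF_eq_const subset_eq)
  then show ?thesis
    unfolding lattice_width_def
    using INF_lower[OF v(1), of "\<lambda>v. (SUP x\<in>convex hull L. ereal (v \<bullet> x)) - (INF x\<in>convex hull L. ereal (v \<bullet> x))"]
    by simp
qed

lemma affine_map_convex_combination:
  assumes "affine_map \<sigma>"
  shows "\<sigma> ((1 - s) *\<^sub>R x + s *\<^sub>R y) = (1 - s) *\<^sub>R \<sigma> x + s *\<^sub>R \<sigma> y"
proof -
  obtain f c where "linear f" "\<And>x. \<sigma> x = f x + c" using assms unfolding affine_map_def by blast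
  then show ?thesis by (simp add: linear_add linear_scale linear_diff algebra_simps)
qed

lemma affine_map_image_convex_hull:
  assumes "affine_map \<sigma>"
  shows "\<sigma> ` (convex hull S) = convex hull (\<sigma> ` S)"
proof -
  obtain f c where f: "linear f" and \<sigma>: "\<And>x. \<sigma> x = f x + c" using assms unfolding affine_map_def by blast
  have "\<sigma> ` X = (+) c ` f ` X" for X by (auto simp: \<sigma> image_image add.commute)
  then show ?thesis by (simp add: convex_hull_linear_image[OF f] convex_hull_translation)
qed

lemma rdist_far_point:
  fixes A D :: "(real^'l) set"
  assumes "A \<noteq> {}" "rdist A D = ereal \<delta>" "0 < d" "d < \<delta>"
  obtains \<pi> b w where "linear \<pi>" "b \<in> D"
    "\<And>a a'. a \<in> A \<Longrightarrow> a' \<in> A \<Longrightarrow> \<bar>\<pi> a - \<pi> a'\<bar> \<le> w"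
    "\<And>a. a \<in> A \<Longrightarrow> d * w < \<bar>\<pi> b - \<pi> a\<bar>"
proof -
  define N where "N \<pi> = (SUP b\<in>D. INF a\<in>A. ereal \<bar>\<pi> b - \<pi> a\<bar>)" for \<pi> :: "real^'l \<Rightarrow> real"
  define P where "P \<pi> = (SUP p\<in>A \<times> A. ereal \<bar>\<pi> (fst p) - \<pi> (snd p)\<bar>)" for \<pi> :: "real^'l \<Rightarrow> real"
  have rd: "(SUP \<pi>\<in>{\<pi>. linear \<pi>}. rquot (N \<pi>) (P \<pi>)) = ereal \<delta>"
    using assms(1,2) unfolding rdist_def N_def P_def by simp
  then have "ereal d < (SUP \<pi>\<in>{\<pi>. linear \<pi>}. rquot (N \<pi>) (P \<pi>))" using assms(4) by simp
  then obtain \<pi> where lin: "linear \<pi>" and gt: "ereal d < rquot (N \<pi>) (P \<pi>)"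
    unfolding less_SUP_iff by blast
  have le: "rquot (N \<pi>) (P \<pi>) \<le> ereal \<delta>"
    using lin rd SUP_upper[of \<pi> "{\<pi>. linear \<pi>}" "\<lambda>\<pi>. rquot (N \<pi>) (P \<pi>)"] by simp
  obtain a0 where "a0 \<in> A" using assms(1) by blast
  then have "0 \<le> P \<pi>" unfolding P_def by (intro SUP_upper2[of "(a0, a0)"]) auto
  then obtain w where w: "P \<pi> = ereal w" "0 < w"
    using gt le assms(3) unfolding rquot_def by (cases "P \<pi>") (auto split: if_splits)
  then have "ereal d < N \<pi> / ereal w" using gt unfolding rquot_def by simp
  then have "ereal (d * w) < N \<pi>" using w(2) by (simp add: ereal_less_divide_iff)
  then obtain b where "b \<in> D" and b: "ereal (d * w) < (INF a\<in>A. ereal \<bar>\<pi> b - \<pi> a\<bar>)"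
    unfolding N_def less_SUP_iff by blast
  show thesis
  proof (rule that[OF lin \<open>b \<in> D\<close>])
    show "\<bar>\<pi> a - \<pi> a'\<bar> \<le> w" if "a \<in> A" "a' \<in> A" for a a'
    proof -
      have "ereal \<bar>\<pi> a - \<pi> a'\<bar> \<le> P \<pi>" unfolding P_def using that by (intro SUP_upper2[of "(a, a')"]) auto
      then show ?thesis using w(1) by simp
    qed
    show "d * w < \<bar>\<pi> b - \<pi> a\<bar>" if "a \<in> A" for a
      using order_less_le_trans[OF b INF_lower[OF that]] by simp
  qed
qed

text \<open>A point \<open>x\<close> between \<open>b\<close> and \<open>a \<in> A\<close> whose image is a lattice point lies in \<open>A\<close>,
  but its \<open>\<pi>\<close>-distance from \<open>b\<close> is at most \<open>s w / (1 - s) \<le> d w\<close>.\<close>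
lemma affinity_image_lattice_free:
  fixes D :: "(real^'l) set" and \<sigma> :: "real^'l \<Rightarrow> real^'k"
  defines "A \<equiv> convex hull (D \<inter> \<sigma> -` int_vecs)"
  assumes "convex D" "affine_map \<sigma>" "b \<in> D" "linear \<pi>"
    and wid: "\<And>a a'. a \<in> A \<Longrightarrow> a' \<in> A \<Longrightarrow> \<bar>\<pi> a - \<pi> a'\<bar> \<le> w"
    and far: "\<And>a. a \<in> A \<Longrightarrow> d * w < \<bar>\<pi> b - \<pi> a\<bar>"
    and s: "0 \<le> s" "s < 1" "s \<le> d * (1 - s)"
  shows "(\<lambda>z. (1 - s) *\<^sub>R \<sigma> b + s *\<^sub>R z) ` \<sigma> ` A \<inter> int_vecs = {}"
proof (rule ccontr)
  assume "(\<lambda>z. (1 - s) *\<^sub>R \<sigma> b + s *\<^sub>R z) ` \<sigma> ` A \<inter> int_vecs \<noteq> {}"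
  then obtain a where "a \<in> A" and lattice: "(1 - s) *\<^sub>R \<sigma> b + s *\<^sub>R \<sigma> a \<in> int_vecs" by auto
  define x where "x = (1 - s) *\<^sub>R b + s *\<^sub>R a"
  have "A \<subseteq> D" unfolding A_def using assms(2) by (intro hull_minimal) auto
  then have "x \<in> D" unfolding x_def using assms(2,4) \<open>a \<in> A\<close> s by (intro convexD) auto
  moreover have "\<sigma> x \<in> int_vecs" unfolding x_def affine_map_convex_combination[OF assms(3)] by (rule lattice)
  ultimately have "x \<in> A" unfolding A_def by (intro hull_inc) simp
  define u where "u = \<bar>\<pi> b - \<pi> x\<bar>"
  have "\<pi> b - \<pi> x = s * (\<pi> b - \<pi> a)"
    unfolding x_def by (simp add: linear_add[OF assms(5)] linear_scale[OF assms(5)] linear_diff[OF assms(5)] algebra_simps)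
  then have "u = s * \<bar>\<pi> b - \<pi> a\<bar>" unfolding u_def using s(1) by (simp add: abs_mult)
  also have "\<dots> \<le> s * (u + w)"
    using wid[OF \<open>x \<in> A\<close> \<open>a \<in> A\<close>] s(1) unfolding u_def by (intro mult_left_mono) linarith+
  finally have "u * (1 - s) \<le> s * w" by (simp add: algebra_simps)
  also have "\<dots> \<le> d * w * (1 - s)"
    using wid[OF \<open>a \<in> A\<close> \<open>a \<in> A\<close>] s(3) mult_right_mono[OF s(3), of w] by (simp add: algebra_simps)
  also have "\<dots> < u * (1 - s)"
    using far[OF \<open>x \<in> A\<close>] s(2) unfolding u_def by (intro mult_strict_right_mono) auto
  finally show False by simp
qed

lemma homothety_ratio:
  fixes s \<delta> :: real
  assumes "0 < \<delta>" "0 < s" "s < \<delta> / (1 + \<delta>)"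
  obtains d where "0 < d" "d < \<delta>" "d * (1 - s) = s" "s < 1"
proof -
  have "s * (1 + \<delta>) < \<delta>" using assms by (simp add: pos_less_divide_eq)
  then have "s < \<delta> * (1 - s)" by (simp add: algebra_simps)
  have "s < 1"
  proof (rule ccontr)
    assume "\<not> s < 1"
    then have "\<delta> * (1 - s) \<le> 0" using assms(1) by (simp add: mult_nonneg_nonpos)
    then show False using \<open>s < \<delta> * (1 - s)\<close> assms(2) by linarith
  qed
  then have "0 < 1 - s" by linarith
  show thesis
  proof (rule that[of "s / (1 - s)"])
    show "0 < s / (1 - s)" using assms(2) \<open>0 < 1 - s\<close> by (rule divide_pos_pos)
    show "s / (1 - s) < \<delta>" using \<open>s < \<delta> * (1 - s)\<close> by (subst pos_divide_less_eq[OF \<open>0 < 1 - s\<close>])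
    have "1 - s \<noteq> 0" using \<open>s < 1\<close> by linarith
    show "s / (1 - s) * (1 - s) = s"
      by (subst nonzero_eq_divide_eq[OF \<open>1 - s \<noteq> 0\<close>, symmetric]) (rule refl)
  qed fact
qed

lemma scaled_lattice_width_le_Flt:
  fixes D :: "(real^'l) set" and \<sigma> :: "real^'l \<Rightarrow> real^'k"
  defines "A \<equiv> convex hull (D \<inter> \<sigma> -` int_vecs)"
  assumes "convex D" "affine_map \<sigma>" "rdist A D = ereal \<delta>" "0 < \<delta>" "interior (\<sigma> ` A) \<noteq> {}"
    and s: "0 < s" "s < \<delta> / (1 + \<delta>)"
  shows "ereal s * lattice_width (\<sigma> ` A) \<le> Flt TYPE('k)"
proof -
  have "A \<noteq> {}" using assms(6) by auto
  obtain d where "0 < d" "d < \<delta>" "d * (1 - s) = s" "s < 1"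
    using homothety_ratio[OF assms(5) s] .
  obtain \<pi> b w where "linear \<pi>" "b \<in> D"
    and wid: "\<And>a a'. a \<in> A \<Longrightarrow> a' \<in> A \<Longrightarrow> \<bar>\<pi> a - \<pi> a'\<bar> \<le> w"
    and far: "\<And>a. a \<in> A \<Longrightarrow> d * w < \<bar>\<pi> b - \<pi> a\<bar>"
    by (rule rdist_far_point[OF \<open>A \<noteq> {}\<close> assms(4) \<open>0 < d\<close> \<open>d < \<delta>\<close>]) (rule that)
  let ?B = "(\<lambda>z. (1 - s) *\<^sub>R \<sigma> b + s *\<^sub>R z) ` \<sigma> ` A"
  have "convex (\<sigma> ` A)" unfolding A_def affine_map_image_convex_hull[OF assms(3)] by simp
  then have "lattice_width ?B \<le> Flt TYPE('k)"
    using assms(6) s(1) \<open>s < 1\<close> \<open>d * (1 - s) = s\<close>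
      affinity_image_lattice_free[OF assms(2,3) \<open>b \<in> D\<close> \<open>linear \<pi>\<close> wid far, folded A_def]
    by (intro lattice_width_le_Flt convex_affinity interior_affinity_nonempty) auto
  moreover have "ereal s * lattice_width (\<sigma> ` A) \<le> lattice_width ?B"
    using \<open>A \<noteq> {}\<close> s(1) by (intro lattice_width_affinity) auto
  ultimately show ?thesis by order
qed

theorem mainTheorem10:
  fixes D :: "(real ^ 'l) set" and \<sigma> :: "real ^ 'l \<Rightarrow> real ^ 'k" and \<delta> :: real
  assumes "convex D"
    and "affine_map \<sigma>"
    and "rdist (convex hull (D \<inter> \<sigma> -` int_vecs)) D = ereal \<delta>"
    and "\<delta> > 0"
  shows "lattice_width (\<sigma> ` (convex hull (D \<inter> \<sigma> -` int_vecs)))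
           \<le> ereal ((1 + \<delta>) / \<delta>) * Flt TYPE('k)"
proof -
  let ?A = "convex hull (D \<inter> \<sigma> -` int_vecs)"
  show ?thesis
  proof (cases "interior (\<sigma> ` ?A) = {}")
    case True
    have "?A \<noteq> {}" using assms(3,4) by (auto simp: rdist_def split: if_splits)
    then have "lattice_width (\<sigma> ` ?A) \<le> 0"
      using True unfolding affine_map_image_convex_hull[OF assms(2)]
      by (intro lattice_width_convex_hull_flat) auto
    also have "0 \<le> ereal ((1 + \<delta>) / \<delta>) * Flt TYPE('k)"
      using Flt_nonneg[where 'k='k] assms(4) by (simp add: ereal_zero_le_0_iff)
    finally show ?thesis .
  next
    case False
    have "ereal (\<delta> / (1 + \<delta>)) * lattice_width (\<sigma> ` ?A) \<le> Flt TYPE('k)"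
    proof (rule ereal_mult_le_of_scaled_le)
      show "0 < \<delta> / (1 + \<delta>)" using assms(4) by simp
      show "ereal s * lattice_width (\<sigma> ` ?A) \<le> Flt TYPE('k)" if "0 < s" "s < \<delta> / (1 + \<delta>)" for s
        using scaled_lattice_width_le_Flt[OF assms(1-4) False that] .
    qed
    then have "ereal ((1 + \<delta>) / \<delta>) * (ereal (\<delta> / (1 + \<delta>)) * lattice_width (\<sigma> ` ?A))
        \<le> ereal ((1 + \<delta>) / \<delta>) * Flt TYPE('k)"
      by (rule ereal_mult_left_mono) (use assms(4) in simp)
    moreover have "ereal ((1 + \<delta>) / \<delta>) * ereal (\<delta> / (1 + \<delta>)) = 1"
      using assms(4) by simp
    ultimately show ?thesis by (metis mult.assoc mult_1)
  qed
qed

end
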